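(* For every prime power $q$ and every $G\in\mathfrak{g}_3(\mathbb{F}_q)$, the nonlooped vertices of $G$ are pairwise adjacent (they form a clique).
   Context: For a symmetric $n\times n$ matrix $A$, the looped graph corresponding to $A$, $\Gamma(A)$, has vertex set $\{1,\dots,n\}$, an edge $ij$ ($i\neq j$) iff $a_{ij}\neq0$, and a loop at $i$ iff $a_{ii}\ne 0$. Definition of $\mathfrak{g}_k(\mathbb{F}_q)$: let $x_1,\dots,x_m$ be representatives of the classes of nonzero vectors of $\mathbb{F}_q^k$ under the relation $x\sim cx$ ($c\in\mathbb{F}_q$, $c\neq0$), and let $U=[x_1\ \cdots\ x_m]$; $\mathfrak{g}_k(\mathbb{F}_q)$ is the set of isomorphism classes of looped graphs $\Gamma(U^tBU)$ as $B$ ranges over the invertible symmetric $k\times k$ matrices over $\mathbb{F}_q$. *)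

theory Defs
  imports "HOL-Analysis.Analysis"
begin

definition bform :: "'a::field ^'n^'n \<Rightarrow> 'a^'n \<Rightarrow> 'a^'n \<Rightarrow> 'a" where
  "bform B x y = (\<Sum>k\<in>UNIV. x $ k * (B *v y) $ k)"

text \<open>U : {0..<m} -> F^k is a system of representatives of the classes of nonzero
  vectors under x ~ c x (c nonzero), i.e. the columns x_1..x_m of the matrix U.\<close>
definition proj_reps :: "nat \<Rightarrow> (nat \<Rightarrow> 'a::field ^'n) \<Rightarrow> bool" where
  "proj_reps m U \<longleftrightarrow>
     (\<forall>i<m. U i \<noteq> 0) \<and>
     (\<forall>i<m. \<forall>j<m. \<forall>c. c \<noteq> 0 \<and> U i = c *s U j \<longrightarrow> i = j) \<and>
     (\<forall>x. x \<noteq> 0 \<longrightarrow> (\<exists>i<m. \<exists>c. c \<noteq> 0 \<and> x = c *s U i))"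

definition gram :: "'a::field ^'n^'n \<Rightarrow> (nat \<Rightarrow> 'a^'n) \<Rightarrow> nat \<Rightarrow> nat \<Rightarrow> 'a" where
  "gram B U i j = bform B (U i) (U j)"

definition has_loop :: "(nat \<Rightarrow> nat \<Rightarrow> 'a::zero) \<Rightarrow> nat \<Rightarrow> bool" where
  "has_loop A i \<longleftrightarrow> A i i \<noteq> 0"

definition adjacent :: "(nat \<Rightarrow> nat \<Rightarrow> 'a::zero) \<Rightarrow> nat \<Rightarrow> nat \<Rightarrow> bool" where
  "adjacent A i j \<longleftrightarrow> i \<noteq> j \<and> A i j \<noteq> 0"

end

theory Submission
  imports Defs
begin

text \<open>
  Two nonlooped vertices i, j of the graph of U^t B U correspond to
  non-proportional vectors u = U i, v = U j of F^3 that are isotropic for the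
  nondegenerate symmetric form b(x,y) = x^t B y.  If they were non-adjacent, then
  span{u, v} would be a totally isotropic plane; this is impossible in dimension 3.

  Concretely, with the (formal) cross product u \<times> v, which is nonzero because u, v
  are not proportional: B u and B v are both orthogonal (for the standard dot
  product) to u and v, hence both are multiples of u \<times> v.  So some nontrivial
  combination of B u and B v vanishes, and by invertibility of B the same
  combination of u and v vanishes, contradicting non-proportionality.
\<close>

definition dotp :: "'a::field ^'n \<Rightarrow> 'a ^'n \<Rightarrow> 'a" where
  "dotp x y = (\<Sum>k\<in>UNIV. x $ k * y $ k)"

lemma bform_eq_dotp: "bform B x y = dotp x (B *v y)"
  by (simp add: bform_def dotp_def)

lemma dotp_3: "dotp (x :: 'a::field ^3) y = x$1 * y$1 + x$2 * y$2 + x$3 * y$3"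
  by (simp add: dotp_def sum_3)

definition xprod :: "'a::field ^3 \<Rightarrow> 'a ^3 \<Rightarrow> 'a ^3" where
  "xprod u v = vector [u$2 * v$3 - u$3 * v$2, u$3 * v$1 - u$1 * v$3, u$1 * v$2 - u$2 * v$1]"

lemma xprod_nth:
  "xprod u v $ 1 = u$2 * v$3 - u$3 * v$2"
  "xprod u v $ 2 = u$3 * v$1 - u$1 * v$3"
  "xprod u v $ 3 = u$1 * v$2 - u$2 * v$1"
  by (simp_all add: xprod_def)

lemma vec3_eq_iff: "(x :: 'a ^3) = y \<longleftrightarrow> x$1 = y$1 \<and> x$2 = y$2 \<and> x$3 = y$3"
  by (simp add: vec_eq_iff forall_3)

lemma xprod_xprod: "xprod x (xprod u v) = dotp x v *s u - dotp x u *s v"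
  by (simp add: vec3_eq_iff xprod_nth dotp_3 algebra_simps)

lemma multiple_if_xprod_eq_0:
  fixes x c :: "'a::field ^3"
  assumes "c \<noteq> 0" and "xprod x c = 0"
  shows "\<exists>\<alpha>. x = \<alpha> *s c"
proof -
  have eqs: "x$2 * c$3 = x$3 * c$2" "x$3 * c$1 = x$1 * c$3" "x$1 * c$2 = x$2 * c$1"
    using assms(2) by (simp_all add: vec3_eq_iff xprod_nth)
  obtain k where "c$k \<noteq> 0" "k \<in> {1, 2, 3}"
    using assms(1) by (auto simp: vec3_eq_iff)
  then have "x = (x$k / c$k) *s c"
    using eqs by (auto simp: vec3_eq_iff field_simps)
  then show ?thesis ..
qed

lemma multiple_of_xprod_if_orthogonal:
  fixes x u v :: "'a::field ^3"
  assumes "dotp x u = 0" and "dotp x v = 0" and "xprod u v \<noteq> 0"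
  shows "\<exists>\<alpha>. x = \<alpha> *s xprod u v"
  using multiple_if_xprod_eq_0[OF assms(3)] assms(1,2) by (simp add: xprod_xprod)

lemma proportional_if_xprod_eq_0:
  fixes u v :: "'a::field ^3"
  assumes "u \<noteq> 0" and "v \<noteq> 0" and "xprod u v = 0"
  shows "\<exists>c. c \<noteq> 0 \<and> u = c *s v"
proof -
  obtain c where "u = c *s v"
    using multiple_if_xprod_eq_0[OF assms(2,3)] by blast
  with assms(1) show ?thesis by auto
qed

lemma bform_sym:
  fixes B :: "'a::field ^'n^'n"
  assumes "transpose B = B"
  shows "bform B x y = bform B y x"
proof -
  have entry_sym: "B$k$l = B$l$k" for k l
    using arg_cong[OF assms, of "\<lambda>M. M$l$k"] by (simp add: transpose_def)
  have "bform B x y = (\<Sum>k\<in>UNIV. \<Sum>l\<in>UNIV. x$k * B$k$l * y$l)"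
    by (simp add: bform_def matrix_vector_mult_def sum_distrib_left mult.assoc)
  also have "\<dots> = (\<Sum>l\<in>UNIV. \<Sum>k\<in>UNIV. y$l * B$l$k * x$k)"
    by (subst sum.swap) (simp add: entry_sym mult_ac)
  also have "\<dots> = bform B y x"
    by (simp add: bform_def matrix_vector_mult_def sum_distrib_left mult.assoc)
  finally show ?thesis .
qed

lemma invertible_kernel_trivial:
  fixes B :: "'a::field ^'n^'n"
  assumes "invertible B" and "B *v x = 0"
  shows "x = 0"
  using assms matrix_left_invertible_ker invertible_left_inverse by blast

lemma totally_isotropic_pair_proportional:
  fixes B :: "'a::field ^3^3" and u v :: "'a ^3"
  assumes sym: "transpose B = B" and inv: "invertible B"
    and "u \<noteq> 0" and "v \<noteq> 0"
    and uu: "bform B u u = 0" and vv: "bform B v v = 0" and uv: "bform B u v = 0"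
  shows "\<exists>c. c \<noteq> 0 \<and> u = c *s v"
proof (rule ccontr)
  assume not_prop: "\<nexists>c. c \<noteq> 0 \<and> u = c *s v"
  then have w: "xprod u v \<noteq> 0"
    using proportional_if_xprod_eq_0 \<open>u \<noteq> 0\<close> \<open>v \<noteq> 0\<close> by blast
  have vu: "bform B v u = 0"
    using uv bform_sym[OF sym] by metis
  obtain a where a: "B *v u = a *s xprod u v"
    using multiple_of_xprod_if_orthogonal[OF _ _ w, of "B *v u"] uu vu
    by (auto simp: bform_eq_dotp dotp_def mult.commute)
  obtain b where b: "B *v v = b *s xprod u v"
    using multiple_of_xprod_if_orthogonal[OF _ _ w, of "B *v v"] uv vv
    by (auto simp: bform_eq_dotp dotp_def mult.commute)
  have "B *v (b *s u - a *s v) = 0"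
    using a b by (simp add: matrix_vector_mult_diff_distrib vector_scalar_commute
        vector_smult_assoc mult.commute)
  then have comb: "b *s u = a *s v"
    using invertible_kernel_trivial[OF inv] by fastforce
  show False
  proof (cases "b = 0")
    case True
    with comb \<open>v \<noteq> 0\<close> have "a = 0"
      by (simp add: vector_mul_eq_0)
    with a have "B *v u = 0" by simp
    with invertible_kernel_trivial[OF inv] \<open>u \<noteq> 0\<close> show False by blast
  next
    case False
    then have "u = (a / b) *s v"
      using arg_cong[OF comb, of "\<lambda>x. inverse b *s x"]
      by (simp add: vector_smult_assoc divide_inverse mult.commute)
    moreover have "a / b \<noteq> 0"
      using calculation \<open>u \<noteq> 0\<close> by auto
    ultimately show False using not_prop by blast
  qed
qed

theorem mainTheorem16:
  fixes B :: "'a::{finite,field} ^3^3" and U :: "nat \<Rightarrow> 'a^3" and m :: nat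
  assumes "proj_reps m U"
    and "transpose B = B"
    and "invertible B"
  shows "\<forall>i<m. \<forall>j<m. i \<noteq> j \<and> \<not> has_loop (gram B U) i \<and> \<not> has_loop (gram B U) j
           \<longrightarrow> adjacent (gram B U) i j"
proof (intro allI impI, elim conjE)
  fix i j assume "i < m" "j < m" "i \<noteq> j"
    and "\<not> has_loop (gram B U) i" "\<not> has_loop (gram B U) j"
  then have nonzero: "U i \<noteq> 0" "U j \<noteq> 0"
    and not_prop: "\<nexists>c. c \<noteq> 0 \<and> U i = c *s U j"
    and isotropic: "bform B (U i) (U i) = 0" "bform B (U j) (U j) = 0"
    using assms(1) by (auto simp: proj_reps_def has_loop_def gram_def)
  show "adjacent (gram B U) i j"
  proof (rule ccontr)
    assume "\<not> adjacent (gram B U) i j"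
    then have "bform B (U i) (U j) = 0"
      using \<open>i \<noteq> j\<close> by (simp add: adjacent_def gram_def)
    with totally_isotropic_pair_proportional[OF assms(2,3) nonzero isotropic] not_prop
    show False by blast
  qed
qed

end
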